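(* Let $n\ge1$, let $c_I(q)$ be the coefficient of $\Psi_I$ in $S^{(1^n)}(q)$ and $e_I(q)$ the coefficient of $L_I(q)$ in $S^{(1^n)}(q)$. Then for every composition $I$ of $n$, \[ e_I(q)=\sum_{J\succeq I}\left(-\tfrac1q\right)^{\ell(I)-\ell(J)}q^{-\mathrm{st}'(I,J)}c_J(q), \] and for every composition $(j_1,\dots,j_r)$ of $n$, \[ c_{(j_1,\dots,j_r)}(q)=[r]_q^{j_1}[r-1]_q^{j_2}\cdots[2]_q^{j_{r-1}}[1]_q^{j_r}. \]
   Context: Compositions: $I=(i_1,\dots,i_r)$ positive integers with sum $n$; $\ell(I)=r$; $\mathrm{Des}(I)$ the set of partial sums other than $n$; $I\preceq J$ (equivalently $J\succeq I$) iff $\mathrm{Des}(I)\supseteq\mathrm{Des}(J)$; for $I\preceq J$, $\mathrm{st}(I,J)=\#\{(a,b)\in\mathrm{Des}(I)\times\mathrm{Des}(J):a\ge b\}$ and $\mathrm{st}'(I,J)=\#\{(a,b)\in\mathrm{Des}(I)\times\mathrm{Des}(J):a\le b\}$. $[m]_q=1+\dots+q^{m-1}$; $(1^n)=(1,\dots,1)$. Over $\mathbb K(q)$ ($\mathrm{char}\,\mathbb K=0$): packed words are words with letter set $\{1,\dots,m\}$; $\mathrm{pack}$ replaces the $t$-th smallest letter by $t$. For a packed word $w$ of length $n$: $\mathrm{WC}(w)$ is the composition of $n$ whose descent set is the set of positions $p<n$ with $w_p$ not occurring in $w_{p+1}\cdots w_n$; $\mathrm{sinv}(w)=\#\{i<j:w_i>w_j,\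 w_j\text{ not occurring in }w_{j+1}\cdots w_n\}$. $\mathbf{WQSym}$ has basis $\mathbf M_u$ with $\mathbf M_{u'}\mathbf M_{u''}=\sum\mathbf M_u$ over packed $u=v\cdot w$ with $\mathrm{pack}(v)=u'$, $\mathrm{pack}(w)=u''$; $\mathbf M_{u'}\star_q\mathbf M_{u''}=\sum q^{\mathrm{sinv}(u)-\mathrm{sinv}(u')-\mathrm{sinv}(u'')}\mathbf M_u$ (associative). $\mathbf{Sym}$ is the quotient by the span of $\mathbf M_u-\mathbf M_v$ with $\mathrm{WC}(u)=\mathrm{WC}(v)$, $\zeta$ the quotient map, $\Psi_I=\zeta(\mathbf M_u)$ for $\mathrm{WC}(u)=I$ (a basis). $\tilde S_m=\sum\mathbf M_u$ over nondecreasing packed $u$ of length $m$; $S^J(q)=\zeta(\tilde S_{j_1}\star_q\cdots\star_q\tilde S_{j_l})$; $L_J(q)=\sum_{I\preceq J}q^{\mathrm{st}(I,J)}\Psi_I$ (a basis). *)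

theory Defs
  imports Main "HOL-Computational_Algebra.Polynomial" "HOL-Computational_Algebra.Fraction_Field"
begin

definition is_comp :: "nat \<Rightarrow> nat list \<Rightarrow> bool" where
  "is_comp n I \<longleftrightarrow> (\<forall>x\<in>set I. 0 < x) \<and> sum_list I = n"

definition Des :: "nat list \<Rightarrow> nat set" where
  "Des I = {sum_list (take k I) | k. 1 \<le> k \<and> k < length I}"

text \<open>refines I J  means  I \<preceq> J, i.e. Des I contains Des J.\<close>
definition refines :: "nat list \<Rightarrow> nat list \<Rightarrow> bool" where
  "refines I J \<longleftrightarrow> Des J \<subseteq> Des I"

definition st :: "nat list \<Rightarrow> nat list \<Rightarrow> nat" where
  "st I J = card {(a, b). a \<in> Des I \<and> b \<in> Des J \<and> a \<ge> b}"

definition st' :: "nat list \<Rightarrow> nat list \<Rightarrow> nat" where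
  "st' I J = card {(a, b). a \<in> Des I \<and> b \<in> Des J \<and> a \<le> b}"

definition qint :: "'a::comm_ring_1 \<Rightarrow> nat \<Rightarrow> 'a" where
  "qint q m = (\<Sum>i<m. q ^ i)"

definition packed :: "nat list \<Rightarrow> bool" where
  "packed w \<longleftrightarrow> set w = {1..card (set w)}"

definition pack :: "nat list \<Rightarrow> nat list" where
  "pack w = map (\<lambda>x. card {y \<in> set w. y \<le> x}) w"

text \<open>Positions p (1-based, p < length w) with w_p not occurring in w_{p+1}...w_n.\<close>
definition wdes :: "nat list \<Rightarrow> nat set" where
  "wdes w = {p. 1 \<le> p \<and> p < length w \<and> w ! (p - 1) \<notin> set (drop p w)}"

definition WC :: "nat list \<Rightarrow> nat list" where
  "WC w = (THE I. is_comp (length w) I \<and> Des I = wdes w)"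

text \<open>sinv, with 0-based indices i < j.\<close>
definition sinv :: "nat list \<Rightarrow> nat" where
  "sinv w = card {(i, j). i < j \<and> j < length w \<and> w ! i > w ! j \<and> w ! j \<notin> set (drop (Suc j) w)}"

section \<open>WQSym (elements as coefficient functions on packed words) and the q-product\<close>

type_synonym 'a wqsym = "nat list \<Rightarrow> 'a"

definition wq_one :: "'a::field wqsym" where
  "wq_one u = (if u = [] then 1 else 0)"

text \<open>Bilinear extension of  M_u' *_q M_u'' = sum over packed u = v w with pack v = u', pack w = u''
  of q^(sinv u - sinv u' - sinv u'') M_u.\<close>
definition star :: "'a::field \<Rightarrow> 'a wqsym \<Rightarrow> 'a wqsym \<Rightarrow> 'a wqsym" where
  "star q f g u = (if packed u then
     (\<Sum>k\<le>length u. f (pack (take k u)) * g (pack (drop k u)) *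
        q powi (int (sinv u) - int (sinv (pack (take k u))) - int (sinv (pack (drop k u)))))
   else 0)"

fun star_list :: "'a::field \<Rightarrow> 'a wqsym list \<Rightarrow> 'a wqsym" where
  "star_list q [] = wq_one"
| "star_list q (f # fs) = star q f (star_list q fs)"

definition Stilde :: "nat \<Rightarrow> 'a::field wqsym" where
  "Stilde m u = (if packed u \<and> length u = m \<and> sorted u then 1 else 0)"

text \<open>zeta, expressed in coordinates w.r.t. the basis Psi: coefficient of Psi_I in zeta(F).\<close>
definition zeta :: "'a::field wqsym \<Rightarrow> nat list \<Rightarrow> 'a" where
  "zeta F I = (\<Sum>u | packed u \<and> length u = sum_list I \<and> WC u = I. F u)"

text \<open>Coefficients of S^J(q) in the Psi basis.\<close>
definition SJ :: "'a::field \<Rightarrow> nat list \<Rightarrow> nat list \<Rightarrow> 'a" where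
  "SJ q J = zeta (star_list q (map Stilde J))"

text \<open>Coefficients, w.r.t. the basis L_J(q) = sum_{I \<preceq> J} q^{st(I,J)} Psi_I, of a homogeneous
  element of degree n given by its Psi-coefficients F.\<close>
definition Lcoeffs :: "'a::field \<Rightarrow> nat \<Rightarrow> (nat list \<Rightarrow> 'a) \<Rightarrow> nat list \<Rightarrow> 'a" where
  "Lcoeffs q n F = (THE e. (\<forall>I. is_comp n I \<longrightarrow>
        F I = (\<Sum>J | is_comp n J \<and> refines I J. q ^ st I J * e J))
      \<and> (\<forall>J. \<not> is_comp n J \<longrightarrow> e J = 0))"

definition qX :: "'k::field poly fract" where
  "qX = Fract [:0, 1:] 1"

end

theory Submission
  imports Defs
begin

text \<open>
  Compositions of n correspond bijectively, via their descent sets, to the subsets of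
  {1..n-1}, and refinement becomes reverse inclusion. The transition matrix from the L-basis to
  the Psi-basis is unitriangular, and its inverse is the claimed matrix: summing over an interval
  E \<subseteq> S \<subseteq> D of the Boolean lattice, the product of the two weights factorises
  over the elements of S, so the sum becomes a product of factors 1 - \<gamma> b over b \<in> D - E,
  and the factor of the largest such b is zero.

  For the Psi-coefficients, S^(1^n)(q) is the sum of q^sinv(u) M_u over all packed words u of
  length n, so c_J(q) is the sinv-generating function of the packed words u with WC(u) = J.
  Removing the first letter a of such a word leaves a word on the same alphabet (or on the
  alphabet without a, exactly when a is its last occurrence), and a contributes as many
  inversions as there are smaller letters. Summing over a thus gives a factor [r]_q with r the
  size of the current alphabet, which shrinks by one after each block of J.
\<close>

section \<open>Compositions and their descent sets\<close>

lemma finite_Des: "finite (Des I)"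
proof -
  have "Des I \<subseteq> (\<lambda>k. sum_list (take k I)) ` {..<length I}" unfolding Des_def by auto
  thus ?thesis by (rule finite_subset) auto
qed

lemma Des_Nil [simp]: "Des [] = {}"
  unfolding Des_def by auto

lemma Des_Cons: "Des (i # I) = (if I = [] then {} else insert i ((+) i ` Des I))"
proof (cases "I = []")
  case True
  thus ?thesis unfolding Des_def by auto
next
  case False
  have "Des (i # I) = insert i ((+) i ` Des I)"
  proof (rule set_eqI, rule iffI)
    fix x assume "x \<in> Des (i # I)"
    then obtain k where k: "1 \<le> k" "k < Suc (length I)" "x = sum_list (take k (i # I))"
      unfolding Des_def by auto
    show "x \<in> insert i ((+) i ` Des I)"
    proof (cases "k = 1")
      case True
      thus ?thesis using k by simp
    next
      case False
      then obtain k' where "k = Suc k'" "1 \<le> k'" using k by (cases k) auto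
      hence "x = i + sum_list (take k' I)" "sum_list (take k' I) \<in> Des I"
        using k unfolding Des_def by auto
      thus ?thesis by auto
    qed
  next
    fix x assume "x \<in> insert i ((+) i ` Des I)"
    then consider "x = i" | k where "1 \<le> k" "k < length I" "x = i + sum_list (take k I)"
      unfolding Des_def by auto
    thus "x \<in> Des (i # I)"
    proof cases
      case 1
      thus ?thesis unfolding Des_def using False by (auto intro!: exI[of _ 1])
    next
      case 2
      thus ?thesis unfolding Des_def by (auto intro!: exI[of _ "Suc k"])
    qed
  qed
  thus ?thesis using False by simp
qed

lemma Des_snoc: "Des (J @ [x]) = (if J = [] then {} else insert (sum_list J) (Des J))"
proof -
  have take: "take k (J @ [x]) = take k J" if "k \<le> length J" for k
    using that by simp
  have "Des (J @ [x]) = {sum_list (take k J) | k. 1 \<le> k \<and> k \<le> length J}"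
    unfolding Des_def by (force simp: less_Suc_eq_le take simp del: take_append)
  also have "\<dots> = {sum_list (take k J) | k. 1 \<le> k \<and> k = length J} \<union> Des J"
    unfolding Des_def by (blast intro: le_neq_implies_less less_imp_le)
  also have "{sum_list (take k J) | k. 1 \<le> k \<and> k = length J} = (if J = [] then {} else {sum_list J})"
    by (cases J) auto
  finally show ?thesis by auto
qed

lemma Des_subset: "\<forall>x\<in>set I. 0 < x \<Longrightarrow> Des I \<subseteq> {1..<sum_list I}"
proof (induction I)
  case (Cons i I)
  show ?case
  proof (cases "I = []")
    case False
    hence "0 < sum_list I" using Cons.prems by (cases I) auto
    thus ?thesis using Cons by (auto simp: Des_Cons)
  qed (simp add: Des_Cons)
qed simp

lemma card_Des: "\<forall>x\<in>set I. 0 < x \<Longrightarrow> card (Des I) = length I - 1"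
proof (induction I)
  case (Cons i I)
  show ?case
  proof (cases "I = []")
    case False
    have "i \<notin> (+) i ` Des I" using Des_subset[of I] Cons.prems by auto
    hence "card (Des (i # I)) = Suc (card ((+) i ` Des I))"
      using False by (simp add: Des_Cons finite_Des)
    also have "card ((+) i ` Des I) = card (Des I)" by (rule card_image) auto
    finally show ?thesis using Cons False by simp
  qed (simp add: Des_Cons)
qed simp

lemma Des_inj:
  assumes "\<forall>x\<in>set I. 0 < x" "\<forall>x\<in>set J. 0 < x" "sum_list I = sum_list J" "Des I = Des J"
  shows "I = J"
  using assms
proof (induction I arbitrary: J)
  case Nil
  thus ?case by (cases J) auto
next
  case (Cons i I)
  then obtain j J' where J: "J = j # J'" by (cases J) auto
  show ?case
  proof (cases "I = []")
    case True
    hence "J' = []" using Cons.prems J by (auto simp: Des_Cons split: if_splits)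
    thus ?thesis using Cons.prems J True by simp
  next
    case False
    hence "J' \<noteq> []" using Cons.prems J by (auto simp: Des_Cons split: if_splits)
    hence eq: "insert i ((+) i ` Des I) = insert j ((+) j ` Des J')"
      using Cons.prems J False by (simp add: Des_Cons)
    have pos: "0 \<notin> Des I" "0 \<notin> Des J'"
      using Des_subset[of I] Des_subset[of J'] Cons.prems J by auto
    have "i = j"
    proof (rule ccontr)
      assume "i \<noteq> j"
      moreover have "i \<in> insert j ((+) j ` Des J')" "j \<in> insert i ((+) i ` Des I)"
        using eq by blast+
      ultimately have "i \<in> (+) j ` Des J'" "j \<in> (+) i ` Des I" by auto
      thus False using pos by auto
    qed
    moreover have "i \<notin> (+) i ` Des I" "i \<notin> (+) i ` Des J'" using pos by auto
    ultimately have "(+) i ` Des I = (+) i ` Des J'" using eq insert_ident by metis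
    hence "Des I = Des J'" by (simp add: inj_image_eq_iff)
    hence "I = J'" using Cons.IH[of J'] Cons.prems J \<open>i = j\<close> by simp
    thus ?thesis using J \<open>i = j\<close> by simp
  qed
qed

fun comp_of_set :: "nat set \<Rightarrow> nat \<Rightarrow> nat list" where
  "comp_of_set S 0 = []"
| "comp_of_set S (Suc m) =
     (if m = 0 then [1]
      else if m \<in> S then comp_of_set S m @ [1]
      else butlast (comp_of_set S m) @ [Suc (last (comp_of_set S m))])"

lemma comp_of_set:
  assumes "1 \<le> m"
  shows "is_comp m (comp_of_set S m) \<and> Des (comp_of_set S m) = S \<inter> {1..<m}"
  using assms
proof (induction m)
  case (Suc m)
  show ?case
  proof (cases "m = 0")
    case False
    define J where "J = comp_of_set S m"
    have pos: "\<forall>x\<in>set J. 0 < x" and sum: "sum_list J = m" and Des: "Des J = S \<inter> {1..<m}"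
      using Suc False unfolding J_def is_comp_def by auto
    hence "J \<noteq> []" using False by auto
    show ?thesis
    proof (cases "m \<in> S")
      case True
      hence "comp_of_set S (Suc m) = J @ [1]" using False unfolding J_def by simp
      thus ?thesis using pos sum Des True False \<open>J \<noteq> []\<close> unfolding is_comp_def
        by (auto simp: Des_snoc)
    next
      case mS: False
      hence eq: "comp_of_set S (Suc m) = butlast J @ [Suc (last J)]"
        using False unfolding J_def by simp
      have JJ: "J = butlast J @ [last J]" using \<open>J \<noteq> []\<close> by simp
      have "sum_list J = sum_list (butlast J) + last J" by (subst JJ) simp
      moreover have "Des (butlast J @ [Suc (last J)]) = Des J"
        by (subst (2) JJ) (simp add: Des_snoc)
      moreover have "\<forall>x\<in>set (butlast J). 0 < x" using pos by (auto dest: in_set_butlastD)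
      ultimately show ?thesis using eq sum Des mS unfolding is_comp_def
        by (auto simp: atLeastLessThanSuc)
    qed
  qed (simp add: is_comp_def Des_Cons)
qed simp

lemma finite_comps: "finite {J. is_comp n J}"
proof -
  have "length J \<le> sum_list J" if "\<forall>x\<in>set J. 0 < x" for J :: "nat list"
    using that by (induction J) auto
  hence "{J. is_comp n J} \<subseteq> {xs. set xs \<subseteq> {0..n} \<and> length xs \<le> n}"
    unfolding is_comp_def by (auto simp: member_le_sum_list)
  thus ?thesis by (rule finite_subset) (rule finite_lists_length_le, simp)
qed

lemma length_comp: "1 \<le> n \<Longrightarrow> is_comp n J \<Longrightarrow> length J = Suc (card (Des J))"
  using card_Des[of J] unfolding is_comp_def by (cases J) auto

lemma Des_comp_inj: "is_comp n I \<Longrightarrow> is_comp n J \<Longrightarrow> Des I = Des J \<Longrightarrow> I = J"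
  using Des_inj unfolding is_comp_def by auto

lemma bij_betw_Des_comps: "1 \<le> n \<Longrightarrow> bij_betw Des {J. is_comp n J} (Pow {1..<n})"
proof (rule bij_betw_imageI)
  show "inj_on Des {J. is_comp n J}"
    using Des_comp_inj by (auto intro: inj_onI)
  assume n: "1 \<le> n"
  show "Des ` {J. is_comp n J} = Pow {1..<n}"
  proof
    show "Des ` {J. is_comp n J} \<subseteq> Pow {1..<n}"
      using Des_subset unfolding is_comp_def by fastforce
    show "Pow {1..<n} \<subseteq> Des ` {J. is_comp n J}"
      using comp_of_set[OF n] by (auto intro!: image_eqI)
  qed
qed

section \<open>Inverting the transition matrix of the L-basis\<close>

lemma card_pairs_sum_fst:
  "finite A \<Longrightarrow> finite B \<Longrightarrow> card {(a, b). a \<in> A \<and> b \<in> B \<and> P a b} = (\<Sum>a\<in>A. card {b \<in> B. P a b})"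
proof -
  assume "finite A" "finite B"
  moreover have "{(a, b). a \<in> A \<and> b \<in> B \<and> P a b} = (SIGMA a:A. {b \<in> B. P a b})" by auto
  ultimately show ?thesis by simp
qed

lemma card_pairs_sum_snd:
  "finite A \<Longrightarrow> finite B \<Longrightarrow> card {(a, b). a \<in> A \<and> b \<in> B \<and> P a b} = (\<Sum>b\<in>B. card {a \<in> A. P a b})"
proof -
  assume fin: "finite A" "finite B"
  have "{(a, b). a \<in> A \<and> b \<in> B \<and> P a b} = prod.swap ` (SIGMA b:B. {a \<in> A. P a b})" by auto
  hence "card {(a, b). a \<in> A \<and> b \<in> B \<and> P a b} = card (SIGMA b:B. {a \<in> A. P a b})"
    by (simp add: card_image)
  thus ?thesis using fin by simp
qed

lemma prod_power_int:
  fixes q :: "'a::field"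
  assumes "q \<noteq> 0" "finite S"
  shows "(\<Prod>b\<in>S. q powi f b) = q powi (\<Sum>b\<in>S. f b)"
  using assms(2) by (induction S rule: finite_induct) (auto simp: power_int_add assms(1))

lemma alternating_sum_subset_interval:
  fixes g :: "'b \<Rightarrow> 'a::comm_ring_1"
  assumes "finite D" "E \<subseteq> D"
  shows "(\<Sum>S | E \<subseteq> S \<and> S \<subseteq> D. (- 1) ^ card (S - E) * (\<Prod>b\<in>S. g b))
       = (\<Prod>b\<in>E. g b) * (\<Prod>b\<in>D - E. 1 - g b)"
proof -
  have fE: "finite E" using assms finite_subset by blast
  have interval: "{S. E \<subseteq> S \<and> S \<subseteq> D} = (\<union>) E ` Pow (D - E)"
    using assms(2) by (auto intro!: image_eqI[where x = "_ - E"])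
  have "inj_on ((\<union>) E) (Pow (D - E))" by (rule inj_onI) blast
  hence "(\<Sum>S | E \<subseteq> S \<and> S \<subseteq> D. (- 1) ^ card (S - E) * (\<Prod>b\<in>S. g b))
      = (\<Sum>U\<in>Pow (D - E). (- 1) ^ card ((E \<union> U) - E) * (\<Prod>b\<in>E \<union> U. g b))"
    unfolding interval by (simp add: sum.reindex)
  also have "\<dots> = (\<Sum>U\<in>Pow (D - E). (\<Prod>b\<in>E. g b) * (\<Prod>b\<in>U. - g b))"
  proof (rule sum.cong[OF refl])
    fix U assume U: "U \<in> Pow (D - E)"
    hence "finite U" "E \<inter> U = {}" "E \<union> U - E = U" using assms(1) finite_subset by auto
    thus "(- 1) ^ card ((E \<union> U) - E) * (\<Prod>b\<in>E \<union> U. g b) = (\<Prod>b\<in>E. g b) * (\<Prod>b\<in>U. - g b)"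
      using fE by (simp add: prod.union_disjoint prod_uminus)
  qed
  also have "\<dots> = (\<Prod>b\<in>E. g b) * (\<Prod>b\<in>D - E. - g b + 1)"
    using prod_add[of "D - E" "\<lambda>b. - g b" "\<lambda>_. 1"] assms(1) by (simp add: sum_distrib_left)
  finally show ?thesis by simp
qed

lemma sum_interval_st_weights:
  fixes q :: "'a::field" and D E :: "'b::linorder set"
  assumes q: "q \<noteq> 0" and fD: "finite D" and ED: "E \<subseteq> D"
  shows "(\<Sum>S | E \<subseteq> S \<and> S \<subseteq> D. q ^ card {(a, b). a \<in> D \<and> b \<in> S \<and> a \<ge> b}
            * (- 1 / q) ^ (card S - card E)
            * q powi (- int (card {(a, b). a \<in> S \<and> b \<in> E \<and> a \<le> b})))
       = (if D = E then 1 else 0)"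
proof -
  have fE: "finite E" using fD ED finite_subset by blast
  define \<gamma> where "\<gamma> b = q powi (int (card {a \<in> D. a \<ge> b}) - int (card {c \<in> E. b \<le> c}) - 1)" for b
  have weight: "q ^ card {(a, b). a \<in> D \<and> b \<in> S \<and> a \<ge> b} * (- 1 / q) ^ (card S - card E)
      * q powi (- int (card {(a, b). a \<in> S \<and> b \<in> E \<and> a \<le> b}))
      = q powi int (card E) * ((- 1) ^ card (S - E) * (\<Prod>b\<in>S. \<gamma> b))"
    if S: "E \<subseteq> S" "S \<subseteq> D" for S
  proof -
    have fS: "finite S" using S fD finite_subset by blast
    define A where "A = (\<Sum>b\<in>S. card {a \<in> D. a \<ge> b})"
    define B where "B = (\<Sum>b\<in>S. card {c \<in> E. b \<le> c})"
    obtain k where k: "card S = card E + k" "card (S - E) = k"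
      using S fS by (metis card_Diff_subset card_mono finite_subset le_add_diff_inverse)
    have "(\<Prod>b\<in>S. \<gamma> b) = q powi (int A - int B - int (card S))"
      unfolding \<gamma>_def A_def B_def by (simp add: prod_power_int[OF q fS] sum_subtractf)
    moreover have "card {(a, b). a \<in> D \<and> b \<in> S \<and> a \<ge> b} = A"
      unfolding A_def by (rule card_pairs_sum_snd[OF fD fS])
    moreover have "card {(a, b). a \<in> S \<and> b \<in> E \<and> a \<le> b} = B"
      unfolding B_def by (rule card_pairs_sum_fst[OF fS fE])
    ultimately show ?thesis
      using k q by (simp add: power_minus[of "1 / q"] power_one_over power_int_diff
          power_int_minus_divide power_add power_int_add mult_ac)
  qed
  have "(\<Sum>S | E \<subseteq> S \<and> S \<subseteq> D. q ^ card {(a, b). a \<in> D \<and> b \<in> S \<and> a \<ge> b}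
            * (- 1 / q) ^ (card S - card E)
            * q powi (- int (card {(a, b). a \<in> S \<and> b \<in> E \<and> a \<le> b})))
      = q powi int (card E) * (\<Sum>S | E \<subseteq> S \<and> S \<subseteq> D. (- 1) ^ card (S - E) * (\<Prod>b\<in>S. \<gamma> b))"
    unfolding sum_distrib_left by (rule sum.cong[OF refl], rule weight) auto
  also have "\<dots> = q powi int (card E) * ((\<Prod>b\<in>E. \<gamma> b) * (\<Prod>b\<in>D - E. 1 - \<gamma> b))"
    by (simp add: alternating_sum_subset_interval[OF fD ED])
  also have "\<dots> = (if D = E then 1 else 0)"
  proof (cases "D = E")
    case True
    hence "\<gamma> b = q powi (- 1)" for b unfolding \<gamma>_def by simp
    thus ?thesis using True q by (simp add: power_int_minus_divide power_one_over)
  next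
    case False
    define b where "b = Max (D - E)"
    have fDE: "finite (D - E)" using fD by simp
    moreover have "D - E \<noteq> {}" using False ED by auto
    ultimately have bDE: "b \<in> D - E" unfolding b_def by (rule Max_in)
    have "a \<le> b" if "a \<in> D - E" for a using fDE that unfolding b_def by simp
    hence "{a \<in> D. a \<ge> b} = insert b {c \<in> E. b \<le> c}"
      using bDE ED by (force intro: antisym)
    hence "\<gamma> b = 1" using bDE fE unfolding \<gamma>_def by simp
    hence "(\<Prod>b\<in>D - E. 1 - \<gamma> b) = 0" using bDE fDE by (metis diff_self prod_zero_iff)
    thus ?thesis using False by simp
  qed
  finally show ?thesis .
qed

lemma st_weights_inverse:
  fixes q :: "'a::field"
  assumes q: "q \<noteq> 0" and n: "1 \<le> n" and I: "is_comp n I" and K: "is_comp n K"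
  shows "(\<Sum>J | is_comp n J \<and> refines I J \<and> refines J K.
            q ^ st I J * ((- 1 / q) ^ (length J - length K) * q powi (- int (st' J K))))
       = (if I = K then 1 else 0)"
proof (cases "refines I K")
  case False
  hence "{J. is_comp n J \<and> refines I J \<and> refines J K} = {}" "I \<noteq> K"
    unfolding refines_def by auto
  thus ?thesis by (simp only:) simp
next
  case True
  define g where "g S = q ^ card {(a, b). a \<in> Des I \<and> b \<in> S \<and> a \<ge> b}
      * (- 1 / q) ^ (card S - card (Des K))
      * q powi (- int (card {(a, b). a \<in> S \<and> b \<in> Des K \<and> a \<le> b}))" for S
  have bij: "bij_betw Des {J. is_comp n J \<and> refines I J \<and> refines J K} {S. Des K \<subseteq> S \<and> S \<subseteq> Des I}"
  proof (rule bij_betw_subset[OF bij_betw_Des_comps[OF n]])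
    have "Des I \<subseteq> {1..<n}" using Des_subset I unfolding is_comp_def by auto
    hence "{S. Des K \<subseteq> S \<and> S \<subseteq> Des I} \<subseteq> Des ` {J. is_comp n J}"
      using bij_betw_imp_surj_on[OF bij_betw_Des_comps[OF n]] by auto
    thus "Des ` {J. is_comp n J \<and> refines I J \<and> refines J K} = {S. Des K \<subseteq> S \<and> S \<subseteq> Des I}"
      unfolding refines_def by blast
  qed auto
  have "(\<Sum>J | is_comp n J \<and> refines I J \<and> refines J K.
            q ^ st I J * ((- 1 / q) ^ (length J - length K) * q powi (- int (st' J K))))
      = (\<Sum>J | is_comp n J \<and> refines I J \<and> refines J K. g (Des J))"
  proof (rule sum.cong[OF refl])
    fix J assume "J \<in> {J. is_comp n J \<and> refines I J \<and> refines J K}"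
    hence "length J - length K = card (Des J) - card (Des K)"
      using length_comp[OF n] K by simp
    thus "q ^ st I J * ((- 1 / q) ^ (length J - length K) * q powi (- int (st' J K))) = g (Des J)"
      unfolding g_def st_def st'_def by (simp add: mult_ac)
  qed
  also have "\<dots> = (\<Sum>S | Des K \<subseteq> S \<and> S \<subseteq> Des I. g S)"
    by (rule sum.reindex_bij_betw[OF bij])
  also have "\<dots> = (if Des I = Des K then 1 else 0)"
    unfolding g_def using True unfolding refines_def
    by (intro sum_interval_st_weights[OF q finite_Des])
  also have "(Des I = Des K) = (I = K)"
    using Des_comp_inj[OF I K] by auto
  finally show ?thesis .
qed

lemma L_expansion_unique:
  fixes q :: "'a::field"
  assumes q: "q \<noteq> 0"
    and hom: "\<And>I. is_comp n I \<Longrightarrow> (\<Sum>J | is_comp n J \<and> refines I J. q ^ st I J * d J) = 0"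
    and I: "is_comp n I"
  shows "d I = 0"
  using I
proof (induction "card (Des I)" arbitrary: I rule: less_induct)
  case less
  let ?A = "{J. is_comp n J \<and> refines I J}"
  have fA: "finite ?A" using finite_comps by (rule finite_subset[rotated]) auto
  have "d J = 0" if "J \<in> ?A - {I}" for J
  proof -
    have "Des J \<subset> Des I" using that less.prems Des_comp_inj unfolding refines_def by blast
    hence "card (Des J) < card (Des I)" by (simp add: finite_Des psubset_card_mono)
    thus ?thesis using less.hyps that by blast
  qed
  hence "(\<Sum>J\<in>?A - {I}. q ^ st I J * d J) = 0" by simp
  moreover have "I \<in> ?A" using less.prems by (simp add: refines_def)
  ultimately have "(\<Sum>J\<in>?A. q ^ st I J * d J) = q ^ st I I * d I"
    by (simp add: sum.remove[OF fA])
  thus "d I = 0" using hom[OF less.prems] q by simp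
qed

lemma L_expansion_inverse:
  fixes q :: "'a::field"
  assumes q: "q \<noteq> 0" and n: "1 \<le> n" and I: "is_comp n I"
  shows "(\<Sum>J | is_comp n J \<and> refines I J. q ^ st I J * (\<Sum>K | is_comp n K \<and> refines J K.
           (- 1 / q) ^ (length J - length K) * q powi (- int (st' J K)) * c K)) = c I"
proof -
  define w where "w J K = (- 1 / q) ^ (length J - length K) * q powi (- int (st' J K))" for J K
  let ?C = "{K. is_comp n K}"
  have "(\<Sum>J | is_comp n J \<and> refines I J. q ^ st I J * (\<Sum>K | is_comp n K \<and> refines J K. w J K * c K))
      = (\<Sum>J | is_comp n J \<and> refines I J. \<Sum>K\<in>{K \<in> ?C. refines J K}. q ^ st I J * (w J K * c K))"
    by (simp add: sum_distrib_left)
  also have "\<dots> = (\<Sum>K\<in>?C. \<Sum>J\<in>{J \<in> {J. is_comp n J \<and> refines I J}. refines J K}.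
      q ^ st I J * (w J K * c K))"
    by (rule sum.swap_restrict) (use finite_comps in \<open>auto intro: finite_subset[rotated]\<close>)
  also have "\<dots> = (\<Sum>K\<in>?C. c K * (if I = K then 1 else 0))"
  proof (rule sum.cong[OF refl])
    fix K assume "K \<in> ?C"
    hence "(\<Sum>J | is_comp n J \<and> refines I J \<and> refines J K. q ^ st I J * w J K)
        = (if I = K then 1 else 0)"
      unfolding w_def using st_weights_inverse[OF q n I] by simp
    moreover have "(\<Sum>J\<in>{J \<in> {J. is_comp n J \<and> refines I J}. refines J K}. q ^ st I J * (w J K * c K))
        = c K * (\<Sum>J | is_comp n J \<and> refines I J \<and> refines J K. q ^ st I J * w J K)"
      by (simp add: sum_distrib_left conj_assoc mult_ac)
    ultimately show "(\<Sum>J\<in>{J \<in> {J. is_comp n J \<and> refines I J}. refines J K}.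
        q ^ st I J * (w J K * c K)) = c K * (if I = K then 1 else 0)"
      by simp
  qed
  also have "\<dots> = c I" using I finite_comps by (simp add: if_distrib cong: if_cong)
  finally show ?thesis unfolding w_def .
qed

lemma Lcoeffs_eq:
  fixes q :: "'a::field"
  assumes q: "q \<noteq> 0" and n: "1 \<le> n" and I: "is_comp n I"
  shows "Lcoeffs q n c I = (\<Sum>J | is_comp n J \<and> refines I J.
           (- 1 / q) ^ (length I - length J) * q powi (- int (st' I J)) * c J)"
proof -
  define e where "e J = (if is_comp n J then (\<Sum>K | is_comp n K \<and> refines J K.
      (- 1 / q) ^ (length J - length K) * q powi (- int (st' J K)) * c K) else 0)" for J
  have solves: "c I = (\<Sum>J | is_comp n J \<and> refines I J. q ^ st I J * e J)" if "is_comp n I" for I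
  proof -
    have "(\<Sum>J | is_comp n J \<and> refines I J. q ^ st I J * e J)
        = (\<Sum>J | is_comp n J \<and> refines I J. q ^ st I J * (\<Sum>K | is_comp n K \<and> refines J K.
            (- 1 / q) ^ (length J - length K) * q powi (- int (st' J K)) * c K))"
      unfolding e_def by (rule sum.cong) auto
    thus ?thesis using L_expansion_inverse[OF q n that] by simp
  qed
  have "Lcoeffs q n c = e"
    unfolding Lcoeffs_def
  proof (rule the_equality)
    fix e' assume e': "(\<forall>I. is_comp n I \<longrightarrow> c I = (\<Sum>J | is_comp n J \<and> refines I J. q ^ st I J * e' J))
      \<and> (\<forall>J. \<not> is_comp n J \<longrightarrow> e' J = 0)"
    have diff: "e' I - e I = 0" if "is_comp n I" for I
    proof (rule L_expansion_unique[OF q _ that])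
      fix I assume "is_comp n I"
      thus "(\<Sum>J | is_comp n J \<and> refines I J. q ^ st I J * (e' J - e J)) = 0"
        using e' solves by (simp add: right_diff_distrib sum_subtractf)
    qed
    show "e' = e"
    proof
      fix J
      show "e' J = e J"
        using diff[of J] e' unfolding e_def by (cases "is_comp n J") auto
    qed
  qed (use solves e_def in auto)
  thus ?thesis using I unfolding e_def by simp
qed

section \<open>Word compositions and secondary inversions\<close>

fun word_comp :: "nat list \<Rightarrow> nat list" where
  "word_comp [] = []"
| "word_comp (a # w) =
     (if a \<in> set w then (case word_comp w of [] \<Rightarrow> [1] | j # J \<Rightarrow> Suc j # J) else 1 # word_comp w)"

lemma word_comp_eq_Nil_iff [simp]: "word_comp w = [] \<longleftrightarrow> w = []"
  by (cases w) (auto split: list.splits)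

lemma word_comp_Cons_mem:
  "a \<in> set w \<Longrightarrow> \<exists>j J. word_comp w = j # J \<and> word_comp (a # w) = Suc j # J"
  by (cases "word_comp w") auto

lemma is_comp_word_comp: "is_comp (length w) (word_comp w)"
proof (induction w)
  case (Cons a w)
  thus ?case
    using word_comp_Cons_mem[of a w] unfolding is_comp_def by (cases "a \<in> set w") auto
qed (simp add: is_comp_def)

lemma length_word_comp: "length (word_comp w) = card (set w)"
proof (induction w)
  case (Cons a w)
  thus ?case using word_comp_Cons_mem[of a w] by (cases "a \<in> set w") (auto simp: insert_absorb)
qed simp

lemma wdes_Cons: "wdes (a # w) = (if a \<notin> set w \<and> w \<noteq> [] then {1} else {}) \<union> Suc ` wdes w"
proof (rule set_eqI)
  fix x
  show "x \<in> wdes (a # w) \<longleftrightarrow> x \<in> (if a \<notin> set w \<and> w \<noteq> [] then {1} else {}) \<union> Suc ` wdes w"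
  proof (cases "x \<le> 1")
    case True
    thus ?thesis by (cases x) (auto simp: wdes_def)
  next
    case False
    then obtain p where "x = Suc p" "1 \<le> p" by (cases x) auto
    thus ?thesis by (auto simp: wdes_def)
  qed
qed

lemma Des_word_comp: "Des (word_comp w) = wdes w"
proof (induction w)
  case Nil
  thus ?case by (simp add: wdes_def)
next
  case (Cons a w)
  show ?case
  proof (cases "a \<in> set w")
    case True
    then obtain j J where "word_comp w = j # J" "word_comp (a # w) = Suc j # J"
      using word_comp_Cons_mem by blast
    moreover have "Des (Suc j # J) = Suc ` Des (j # J)"
      by (auto simp: Des_Cons image_image)
    ultimately show ?thesis using Cons True by (simp add: wdes_Cons)
  next
    case False
    thus ?thesis using Cons by (auto simp: wdes_Cons Des_Cons image_image)
  qed
qed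

lemma WC_eq_word_comp: "WC w = word_comp w"
  unfolding WC_def
proof (rule the_equality)
  show "is_comp (length w) (word_comp w) \<and> Des (word_comp w) = wdes w"
    using is_comp_word_comp Des_word_comp by blast
  fix I assume "is_comp (length w) I \<and> Des I = wdes w"
  thus "I = word_comp w" using Des_comp_inj is_comp_word_comp Des_word_comp by metis
qed

lemma in_set_drop_conv_nth: "x \<in> set (drop n w) \<longleftrightarrow> (\<exists>i. n \<le> i \<and> i < length w \<and> w ! i = x)"
proof
  assume "x \<in> set (drop n w)"
  then obtain i where "i < length (drop n w)" "drop n w ! i = x" by (auto simp: in_set_conv_nth)
  thus "\<exists>i. n \<le> i \<and> i < length w \<and> w ! i = x" by (intro exI[of _ "n + i"]) auto
next
  assume "\<exists>i. n \<le> i \<and> i < length w \<and> w ! i = x"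
  then obtain i where "n \<le> i" "i < length w" "w ! i = x" by blast
  hence "drop n w ! (i - n) = x" "i - n < length (drop n w)" by auto
  thus "x \<in> set (drop n w)" by (metis nth_mem)
qed

text \<open>Every letter has exactly one last occurrence.\<close>
lemma card_last_occurrences:
  "card {j. j < length w \<and> P (w ! j) \<and> w ! j \<notin> set (drop (Suc j) w)} = card {b \<in> set w. P b}"
proof (rule bij_betw_same_card[of "nth w"], rule bij_betw_imageI)
  let ?L = "{j. j < length w \<and> P (w ! j) \<and> w ! j \<notin> set (drop (Suc j) w)}"
  have le: "j1 \<le> j2" if "j1 \<in> ?L" "j2 \<in> ?L" "w ! j1 = w ! j2" for j1 j2
  proof (rule ccontr)
    assume "\<not> j1 \<le> j2"
    hence "w ! j2 \<in> set (drop (Suc j2) w)"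
      using that unfolding in_set_drop_conv_nth by (auto intro!: exI[of _ j1])
    thus False using that by simp
  qed
  show "inj_on (nth w) ?L"
  proof (rule inj_onI)
    fix j1 j2 assume "j1 \<in> ?L" "j2 \<in> ?L" "w ! j1 = w ! j2"
    thus "j1 = j2" by (intro antisym le) simp_all
  qed
  show "nth w ` ?L = {b \<in> set w. P b}"
  proof
    show "{b \<in> set w. P b} \<subseteq> nth w ` ?L"
    proof
      fix b assume b: "b \<in> {b \<in> set w. P b}"
      define M where "M = {j. j < length w \<and> w ! j = b}"
      have "finite M" "M \<noteq> {}" using b unfolding M_def by (auto simp: in_set_conv_nth)
      hence max: "Max M \<in> M" "\<And>k. k \<in> M \<Longrightarrow> k \<le> Max M" by auto
      have "b \<notin> set (drop (Suc (Max M)) w)"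
      proof
        assume "b \<in> set (drop (Suc (Max M)) w)"
        then obtain k where "Suc (Max M) \<le> k" "k \<in> M"
          unfolding in_set_drop_conv_nth M_def by blast
        thus False using max(2) by fastforce
      qed
      hence "Max M \<in> ?L" using b max(1) unfolding M_def by auto
      thus "b \<in> nth w ` ?L" using max(1) unfolding M_def by force
    qed
  qed auto
qed

lemma sinv_Cons: "sinv (a # w) = sinv w + card {b \<in> set w. b < a}"
proof -
  define P where "P v = {(i, j). i < j \<and> j < length v \<and> v ! i > v ! j \<and> v ! j \<notin> set (drop (Suc j) v)}"
    for v :: "nat list"
  define L where "L = {j. j < length w \<and> w ! j < a \<and> w ! j \<notin> set (drop (Suc j) w)}"
  have fin: "finite (P v)" for v
    by (rule finite_subset[of _ "{..<length v} \<times> {..<length v}"]) (auto simp: P_def)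
  have split: "P (a # w) = (\<lambda>j. (0, Suc j)) ` L \<union> map_prod Suc Suc ` P w"
  proof (rule set_eqI)
    fix x :: "nat \<times> nat"
    obtain i j where x: "x = (i, j)" by (cases x)
    show "x \<in> P (a # w) \<longleftrightarrow> x \<in> (\<lambda>j. (0, Suc j)) ` L \<union> map_prod Suc Suc ` P w"
      unfolding x P_def L_def by (cases i; cases j) auto
  qed
  have "card (P (a # w)) = card ((\<lambda>j. (0::nat, Suc j)) ` L) + card (map_prod Suc Suc ` P w)"
    unfolding split by (intro card_Un_disjoint) (auto simp: fin L_def)
  also have "\<dots> = card L + card (P w)"
    by (simp add: card_image inj_on_def map_prod_def split: prod.splits)
  also have "card L = card {b \<in> set w. b < a}"
    unfolding L_def by (rule card_last_occurrences)
  finally show ?thesis unfolding sinv_def P_def by simp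
qed

lemma sinv_eq_0:
  assumes "length v \<le> 1"
  shows "sinv v = 0"
proof -
  have "{(i, j). i < j \<and> j < length v \<and> v ! i > v ! j \<and> v ! j \<notin> set (drop (Suc j) v)} = {}"
    using assms by auto
  thus ?thesis unfolding sinv_def by (simp only:) simp
qed

definition rank_in :: "nat set \<Rightarrow> nat \<Rightarrow> nat" where
  "rank_in A x = card {y \<in> A. y < x}"

lemma bij_betw_rank_in:
  assumes fA: "finite A"
  shows "bij_betw (rank_in A) A {..<card A}"
proof -
  have less: "rank_in A x < rank_in A y" if "x \<in> A" "y \<in> A" "x < y" for x y
    unfolding rank_in_def using that fA by (intro psubset_card_mono) auto
  have "inj_on (rank_in A) A"
    by (rule inj_onI) (metis less less_irrefl linorder_neqE_nat)
  moreover have "rank_in A ` A \<subseteq> {..<card A}"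
    unfolding rank_in_def using fA by (auto intro!: psubset_card_mono)
  ultimately show ?thesis
    by (simp add: bij_betw_def card_image card_subset_eq)
qed

lemma sum_power_rank_in: "finite A \<Longrightarrow> (\<Sum>a\<in>A. q ^ rank_in A a) = qint q (card A)"
  unfolding qint_def by (rule sum.reindex_bij_betw[OF bij_betw_rank_in])

lemma length_pack [simp]: "length (pack w) = length w"
  by (simp add: pack_def)

lemma packed_pack: "packed (pack w)"
proof -
  have "card {y \<in> set w. y \<le> x} = Suc (rank_in (set w) x)" if "x \<in> set w" for x
  proof -
    have "{y \<in> set w. y \<le> x} = insert x {y \<in> set w. y < x}" using that by auto
    thus ?thesis unfolding rank_in_def by simp
  qed
  hence "set (pack w) = Suc ` rank_in (set w) ` set w"
    unfolding pack_def by (auto simp: image_image)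
  also have "\<dots> = {1..card (set w)}"
    using bij_betw_rank_in[of "set w"] by (simp add: bij_betw_def lessThan_atLeast0 image_Suc_atLeastLessThan
        atLeastLessThanSuc_atLeastAtMost)
  finally show ?thesis unfolding packed_def by simp
qed

lemma star_Stilde_one:
  fixes q :: "'a::field"
  shows "star q (Stilde 1) G u = (if packed u \<and> u \<noteq> []
           then G (pack (tl u)) * q powi (int (sinv u) - int (sinv (pack (tl u)))) else 0)"
proof -
  define X where "X k = Stilde 1 (pack (take k u)) * G (pack (drop k u)) *
      q powi (int (sinv u) - int (sinv (pack (take k u))) - int (sinv (pack (drop k u))))" for k
  have "X k = (if k = 1 then X 1 else 0)" if "k \<le> length u" for k
    using that by (auto simp: X_def Stilde_def)
  hence "(\<Sum>k\<le>length u. X k) = (\<Sum>k\<le>length u. if k = 1 then X 1 else 0)"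
    by (intro sum.cong) auto
  also have "\<dots> = (if u = [] then 0 else X 1)"
    by (cases u) (auto simp: sum.delta Suc_le_eq)
  also have "\<dots> = (if u = [] then 0
      else G (pack (tl u)) * q powi (int (sinv u) - int (sinv (pack (tl u)))))"
  proof (cases u)
    case (Cons a w)
    have "{y. y = a \<and> y \<le> a} = {a}" by auto
    hence "pack [a] = [1]" by (simp add: pack_def)
    hence "Stilde 1 (pack [a]) = (1::'a)" "sinv (pack [a]) = 0"
      by (simp_all add: Stilde_def packed_def sinv_eq_0)
    thus ?thesis using Cons by (simp add: X_def)
  qed simp
  finally have sum_X: "(\<Sum>k\<le>length u. X k) = (if u = [] then 0
      else G (pack (tl u)) * q powi (int (sinv u) - int (sinv (pack (tl u)))))" .
  have "star q (Stilde 1) G u = (if packed u then (\<Sum>k\<le>length u. X k) else 0)"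
    unfolding star_def X_def by (rule refl)
  thus ?thesis by (simp only: sum_X) simp
qed

lemma star_list_Stilde_ones:
  fixes q :: "'a::field"
  assumes q: "q \<noteq> 0"
  shows "star_list q (map Stilde (replicate n 1)) u = (if packed u \<and> length u = n then q ^ sinv u else 0)"
proof (induction n arbitrary: u)
  case 0
  have "packed []" unfolding packed_def by simp
  thus ?case by (auto simp: wq_one_def sinv_def)
next
  case (Suc n)
  have "star_list q (map Stilde (replicate (Suc n) 1)) u
      = star q (Stilde 1) (star_list q (map Stilde (replicate n 1))) u"
    by simp
  also have "\<dots> = (if packed u \<and> u \<noteq> [] \<and> length (tl u) = n
      then q ^ sinv (pack (tl u)) * q powi (int (sinv u) - int (sinv (pack (tl u)))) else 0)"
    unfolding star_Stilde_one Suc.IH using packed_pack by simp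
  also have "\<dots> = (if packed u \<and> length u = Suc n then q ^ sinv u else 0)"
    using q by (cases u) (auto simp: power_int_diff)
  finally show ?case .
qed

section \<open>The Psi-coefficients of S^(1^n)(q)\<close>

definition qint_prod :: "'a::comm_ring_1 \<Rightarrow> nat list \<Rightarrow> 'a" where
  "qint_prod q J = (\<Prod>k<length J. qint q (length J - k) ^ (J ! k))"

lemma qint_prod_Nil [simp]: "qint_prod q [] = 1"
  by (simp add: qint_prod_def)

lemma qint_prod_Cons: "qint_prod q (j # J) = qint q (Suc (length J)) ^ j * qint_prod q J"
  by (simp add: qint_prod_def prod.lessThan_Suc_shift del: prod.lessThan_Suc)

definition words_with :: "nat set \<Rightarrow> nat list \<Rightarrow> nat list set" where
  "words_with A J = {u. set u = A \<and> word_comp u = J}"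

lemma finite_words_with:
  assumes "finite A"
  shows "finite (words_with A J)"
proof (rule finite_subset)
  show "words_with A J \<subseteq> {xs. set xs \<subseteq> A \<and> length xs = sum_list J}"
    unfolding words_with_def using is_comp_word_comp unfolding is_comp_def by auto
  show "finite {xs. set xs \<subseteq> A \<and> length xs = sum_list J}"
    using finite_lists_length_eq[OF assms] .
qed

lemma words_with_Cons_one:
  "words_with A (1 # J) = (\<lambda>(a, w). a # w) ` (SIGMA a:A. words_with (A - {a}) J)"
proof (intro equalityI subsetI)
  fix u assume u: "u \<in> words_with A (1 # J)"
  then obtain a w where uw: "u = a # w" unfolding words_with_def by (cases u) auto
  have "a \<notin> set w"
  proof
    assume "a \<in> set w"
    then obtain j J' where "word_comp w = j # J'" "word_comp u = Suc j # J'"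
      using word_comp_Cons_mem uw by blast
    moreover have "0 < j" using is_comp_word_comp[of w] \<open>word_comp w = j # J'\<close>
      unfolding is_comp_def by auto
    ultimately show False using u unfolding words_with_def by auto
  qed
  thus "u \<in> (\<lambda>(a, w). a # w) ` (SIGMA a:A. words_with (A - {a}) J)"
    using u uw unfolding words_with_def by auto
next
  fix u assume "u \<in> (\<lambda>(a, w). a # w) ` (SIGMA a:A. words_with (A - {a}) J)"
  then obtain a w where "u = a # w" "a \<in> A" "set w = A - {a}" "word_comp w = J"
    unfolding words_with_def by auto
  thus "u \<in> words_with A (1 # J)" unfolding words_with_def by auto
qed

lemma words_with_Cons_Suc:
  assumes "1 \<le> j"
  shows "words_with A (Suc j # J) = (\<lambda>(a, w). a # w) ` (SIGMA a:A. words_with A (j # J))"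
proof (intro equalityI subsetI)
  fix u assume u: "u \<in> words_with A (Suc j # J)"
  then obtain a w where uw: "u = a # w" unfolding words_with_def by (cases u) auto
  have "a \<in> set w"
  proof (rule ccontr)
    assume "a \<notin> set w"
    hence "word_comp u = 1 # word_comp w" using uw by simp
    thus False using u assms unfolding words_with_def by auto
  qed
  then obtain j' J' where "word_comp w = j' # J'" "word_comp u = Suc j' # J'"
    using word_comp_Cons_mem uw by blast
  thus "u \<in> (\<lambda>(a, w). a # w) ` (SIGMA a:A. words_with A (j # J))"
    using u uw \<open>a \<in> set w\<close> unfolding words_with_def by auto
next
  fix u assume "u \<in> (\<lambda>(a, w). a # w) ` (SIGMA a:A. words_with A (j # J))"
  then obtain a w where "u = a # w" "a \<in> A" "set w = A" "word_comp w = j # J"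
    unfolding words_with_def by auto
  thus "u \<in> words_with A (Suc j # J)" unfolding words_with_def by auto
qed

text \<open>Prepending a letter a to a word on (nearly) the same alphabet A adds rank_in A a inversions.\<close>
lemma sum_sinv_Cons_words:
  fixes q :: "'a::comm_ring_1"
  assumes fA: "finite A"
    and B: "\<And>a. a \<in> A \<Longrightarrow> A - {a} \<subseteq> B a \<and> B a \<subseteq> A"
    and P: "\<And>a. a \<in> A \<Longrightarrow> (\<Sum>w\<in>words_with (B a) J. q ^ sinv w) = P"
  shows "(\<Sum>u\<in>(\<lambda>(a, w). a # w) ` (SIGMA a:A. words_with (B a) J). q ^ sinv u) = qint q (card A) * P"
proof -
  have "inj_on (\<lambda>(a, w). a # w) (SIGMA a:A. words_with (B a) J)"
    by (auto simp: inj_on_def)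
  hence "(\<Sum>u\<in>(\<lambda>(a, w). a # w) ` (SIGMA a:A. words_with (B a) J). q ^ sinv u)
      = (\<Sum>(a, w)\<in>(SIGMA a:A. words_with (B a) J). q ^ sinv (a # w))"
    by (rule sum.reindex_cong) auto
  also have "\<dots> = (\<Sum>a\<in>A. \<Sum>w\<in>words_with (B a) J. q ^ sinv (a # w))"
  proof (rule sum.Sigma[symmetric, OF fA], rule ballI)
    fix a assume "a \<in> A"
    thus "finite (words_with (B a) J)" using B fA by (meson finite_subset finite_words_with)
  qed
  also have "\<dots> = (\<Sum>a\<in>A. q ^ rank_in A a * P)"
  proof (rule sum.cong[OF refl])
    fix a assume a: "a \<in> A"
    have "{b \<in> set w. b < a} = {b \<in> A. b < a}" if "w \<in> words_with (B a) J" for w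
      using that B[OF a] unfolding words_with_def by auto
    hence "(\<Sum>w\<in>words_with (B a) J. q ^ sinv (a # w))
        = (\<Sum>w\<in>words_with (B a) J. q ^ rank_in A a * q ^ sinv w)"
      by (intro sum.cong) (simp_all add: sinv_Cons rank_in_def power_add mult_ac)
    thus "(\<Sum>w\<in>words_with (B a) J. q ^ sinv (a # w)) = q ^ rank_in A a * P"
      using P[OF a] by (simp add: sum_distrib_left[symmetric])
  qed
  also have "\<dots> = qint q (card A) * P"
    by (simp add: sum_distrib_right[symmetric] sum_power_rank_in fA)
  finally show ?thesis .
qed

lemma sum_sinv_words_with:
  fixes q :: "'a::comm_ring_1"
  assumes "\<forall>x\<in>set J. 0 < x" "finite A" "card A = length J"
  shows "(\<Sum>u\<in>words_with A J. q ^ sinv u) = qint_prod q J"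
  using assms
proof (induction "sum_list J" arbitrary: A J rule: less_induct)
  case less
  show ?case
  proof (cases J)
    case Nil
    hence "words_with A J = {[]}" using less.prems unfolding words_with_def by auto
    thus ?thesis using Nil by (simp add: sinv_eq_0)
  next
    case (Cons j J')
    obtain j' where j: "j = Suc j'" using less.prems Cons by (cases j) auto
    show ?thesis
    proof (cases "j' = 0")
      case True
      hence J: "J = 1 # J'" using Cons j by simp
      have "(\<Sum>w\<in>words_with (A - {a}) J'. q ^ sinv w) = qint_prod q J'" if "a \<in> A" for a
        using less.prems J that by (intro less.hyps) auto
      hence "(\<Sum>u\<in>words_with A J. q ^ sinv u) = qint q (card A) * qint_prod q J'"
        unfolding J words_with_Cons_one using less.prems by (intro sum_sinv_Cons_words) auto
      thus ?thesis using less.prems J by (simp add: qint_prod_Cons)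
    next
      case False
      hence J: "J = Suc j' # J'" "1 \<le> j'" using Cons j by auto
      have "(\<Sum>w\<in>words_with A (j' # J'). q ^ sinv w) = qint_prod q (j' # J')"
        using less.prems J by (intro less.hyps) auto
      hence "(\<Sum>u\<in>words_with A J. q ^ sinv u) = qint q (card A) * qint_prod q (j' # J')"
        unfolding J words_with_Cons_Suc[OF J(2)] using less.prems by (intro sum_sinv_Cons_words) auto
      thus ?thesis using less.prems J by (simp add: qint_prod_Cons)
    qed
  qed
qed

lemma SJ_ones_eq_qint_prod:
  fixes q :: "'a::field"
  assumes q: "q \<noteq> 0" and J: "is_comp n J"
  shows "SJ q (replicate n 1) J = qint_prod q J"
proof -
  have words: "{u. packed u \<and> length u = n \<and> WC u = J} = words_with {1..length J} J"
  proof (intro equalityI subsetI)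
    fix u assume "u \<in> {u. packed u \<and> length u = n \<and> WC u = J}"
    thus "u \<in> words_with {1..length J} J"
      using length_word_comp[of u] unfolding words_with_def packed_def WC_eq_word_comp by auto
  next
    fix u assume u: "u \<in> words_with {1..length J} J"
    hence "length u = n"
      using is_comp_word_comp[of u] J unfolding words_with_def is_comp_def by auto
    thus "u \<in> {u. packed u \<and> length u = n \<and> WC u = J}"
      using u unfolding words_with_def packed_def WC_eq_word_comp by auto
  qed
  moreover have "sum_list J = n" using J unfolding is_comp_def by simp
  ultimately have "SJ q (replicate n 1) J
      = (\<Sum>u\<in>words_with {1..length J} J. star_list q (map Stilde (replicate n 1)) u)"
    unfolding SJ_def zeta_def by simp_all
  also have "\<dots> = (\<Sum>u\<in>words_with {1..length J} J. q ^ sinv u)"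
  proof (rule sum.cong[OF refl])
    fix u assume "u \<in> words_with {1..length J} J"
    hence "u \<in> {u. packed u \<and> length u = n \<and> WC u = J}" using words by blast
    thus "star_list q (map Stilde (replicate n 1)) u = q ^ sinv u"
      by (subst star_list_Stilde_ones[OF q]) simp
  qed
  also have "\<dots> = qint_prod q J"
    using J unfolding is_comp_def by (intro sum_sinv_words_with) auto
  finally show ?thesis .
qed

lemma qX_nonzero: "(qX :: 'k::field poly fract) \<noteq> 0"
  unfolding qX_def by (simp add: Zero_fract_def eq_fract)

theorem mainTheorem11:
  fixes n :: nat
  assumes "n \<ge> 1"
  defines "c \<equiv> SJ (qX :: 'k::field_char_0 poly fract) (replicate n 1)"
  defines "e \<equiv> Lcoeffs (qX :: 'k poly fract) n c"
  shows "(\<forall>I. is_comp n I \<longrightarrow>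
            e I = (\<Sum>J | is_comp n J \<and> refines I J.
                     (- 1 / qX) ^ (length I - length J) * qX powi (- int (st' I J)) * c J))
       \<and> (\<forall>J. is_comp n J \<longrightarrow>
            c J = (\<Prod>k<length J. qint qX (length J - k) ^ (J ! k)))"
  using Lcoeffs_eq[OF qX_nonzero assms(1)] SJ_ones_eq_qint_prod[OF qX_nonzero]
  unfolding c_def e_def qint_prod_def by blast

end
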